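(* Let $\bm M=\bm M^\star+\bm E\in\mathbb R^{n_1\times n_2}$, with SVDs $\bm M^\star=\sum_{i=1}^{n_1}\sigma_i^\star\bm u_i^\star\bm v_i^{\star\top}$ and $\bm M=\sum_{i=1}^{n_1}\sigma_i\bm u_i\bm v_i^\top$, where $\sigma_1^\star\ge\dots\ge\sigma_{n_1}^\star\ge0$ and $\sigma_1\ge\dots\ge\sigma_{n_1}\ge0$ are the singular values, $\bm u_i^\star,\bm u_i$ the corresponding left singular vectors and $\bm v_i^\star,\bm v_i$ the corresponding right singular vectors. Let $\bm U^\star=[\bm u_1^\star,\dots,\bm u_r^\star]$ and $\bm U=[\bm u_1,\dots,\bm u_r]$ be the rank-$r$ leading left singular subspaces of $\bm M^\star$ and $\bm M$. If $\sigma_r^\star-\sigma_{r+1}^\star>2\|\bm E\|$, then $$\big\|(\bm U\bm U^\top-\bm U^\star\bm U^{\star\top})\bm M^\star\big\|\le\frac{4\sigma_r^\star\|\bm E\|}{\sigma_r^\star-\sigma_{r+1}^\star}.$$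
   Context: $\|\cdot\|$ denotes the spectral norm. *)

theory Defs
  imports "HOL-Analysis.Analysis"
begin

definition outer :: "real^'m \<Rightarrow> real^'n \<Rightarrow> real^'n^'m" where
  "outer u v = (\<chi> i j. u $ i * v $ j)"

definition spec_norm :: "real^'n^'m \<Rightarrow> real" where
  "spec_norm A = onorm (\<lambda>x. A *v x)"

text \<open>SVD of an n1 x n2 matrix A (n1 = CARD('m)), indices 0-based:
  A = sum_{i<n1} sigma_i u_i v_i^T with orthonormal u_0..u_{n1-1},
  orthonormal v_0..v_{n1-1}, sigma nonincreasing and nonnegative;
  by convention sigma_i = 0 for i >= n1.\<close>
definition is_svd :: "real^'n^'m \<Rightarrow> (nat \<Rightarrow> real) \<Rightarrow> (nat \<Rightarrow> real^'m) \<Rightarrow> (nat \<Rightarrow> real^'n) \<Rightarrow> bool" where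
  "is_svd A \<sigma> u v \<longleftrightarrow>
     (\<forall>i<CARD('m). \<forall>j<CARD('m). u i \<bullet> u j = (if i = j then 1 else 0)) \<and>
     (\<forall>i<CARD('m). \<forall>j<CARD('m). v i \<bullet> v j = (if i = j then 1 else 0)) \<and>
     (\<forall>i j. i \<le> j \<longrightarrow> \<sigma> j \<le> \<sigma> i) \<and>
     (\<forall>i. 0 \<le> \<sigma> i) \<and>
     (\<forall>i. CARD('m) \<le> i \<longrightarrow> \<sigma> i = 0) \<and>
     A = (\<Sum>i<CARD('m). \<sigma> i *\<^sub>R outer (u i) (v i))"

definition proj :: "(nat \<Rightarrow> real^'m) \<Rightarrow> nat \<Rightarrow> real^'m^'m" where
  "proj u r = (\<Sum>i<r. outer (u i) (u i))"

end

theory Submission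
  imports Defs
begin

(*
  Indices are 0-based, so the gap is d = \<sigma>s (r - 1) - \<sigma>s r; write e = ||E||, let P_T, P_B
  be the projections onto the left singular vectors of M = Mstar + E with index in
  T = {..<r} resp. B = {r..<m}, and P*_T, P*_B, Q_B, Q*_T, ... likewise for Mstar and for
  the right singular vectors. Since P_T + P_B = P*_T + P*_B = 1,
    (P_T - P*_T) Mstar = P_T P*_B Mstar - P_B P*_T Mstar.
  The first term is at most ||P_T P*_B|| \<sigma>s r. In the second, P*_T Mstar = Mstar Q*_T =
  (M - E) Q*_T and P_B M = M Q_B, so it is at most \<sigma> r ||Q_B Q*_T|| + e. Weyl's inequality
  gives |\<sigma> i - \<sigma>s i| \<le> e, and Wedin's sin-theta theorem bounds both ||P_T P*_B|| and
  ||Q*_T Q_B|| = ||Q_B Q*_T|| by e / (d - e) \<le> 2 e / d. Collecting terms yields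
  4 \<sigma>s (r - 1) e / d.
*)

definition orthonormal_upto :: "nat \<Rightarrow> (nat \<Rightarrow> 'a::real_inner) \<Rightarrow> bool" where
  "orthonormal_upto m p \<longleftrightarrow> (\<forall>i<m. \<forall>j<m. p i \<bullet> p j = (if i = j then 1 else 0))"

lemma orthonormal_upto_mono: "orthonormal_upto m p \<Longrightarrow> n \<le> m \<Longrightarrow> orthonormal_upto n p"
  unfolding orthonormal_upto_def by auto

definition orth_proj :: "(nat \<Rightarrow> 'a::real_inner) \<Rightarrow> nat set \<Rightarrow> 'a \<Rightarrow> 'a" where
  "orth_proj p I x = (\<Sum>i\<in>I. (p i \<bullet> x) *\<^sub>R p i)"

lemma inner_orthonormal_sum:
  assumes "orthonormal_upto m p" "I \<subseteq> {..<m}" "k < m"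
  shows "p k \<bullet> (\<Sum>i\<in>I. c i *\<^sub>R p i) = (if k \<in> I then c k else 0)"
proof -
  have "p k \<bullet> (\<Sum>i\<in>I. c i *\<^sub>R p i) = (\<Sum>i\<in>I. c i * (p k \<bullet> p i))"
    by (simp add: inner_sum_right)
  also have "\<dots> = (\<Sum>i\<in>I. if i = k then c i else 0)"
    using assms unfolding orthonormal_upto_def by (intro sum.cong) auto
  also have "\<dots> = (if k \<in> I then c k else 0)"
    using finite_subset[OF assms(2)] by (simp add: sum.delta')
  finally show ?thesis .
qed

lemma norm_orthonormal_sum_sq:
  assumes "orthonormal_upto m p" "I \<subseteq> {..<m}"
  shows "(norm (\<Sum>i\<in>I. c i *\<^sub>R p i))\<^sup>2 = (\<Sum>i\<in>I. (c i)\<^sup>2)"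
proof -
  have "(norm (\<Sum>i\<in>I. c i *\<^sub>R p i))\<^sup>2 = (\<Sum>i\<in>I. c i * (p i \<bullet> (\<Sum>j\<in>I. c j *\<^sub>R p j)))"
    by (simp add: power2_norm_eq_inner inner_sum_left)
  also have "\<dots> = (\<Sum>i\<in>I. (c i)\<^sup>2)"
    using inner_orthonormal_sum[OF assms] assms(2) by (intro sum.cong) (auto simp: power2_eq_square)
  finally show ?thesis .
qed

lemma inner_orth_proj:
  assumes "orthonormal_upto m p" "I \<subseteq> {..<m}" "k < m"
  shows "p k \<bullet> orth_proj p I x = (if k \<in> I then p k \<bullet> x else 0)"
  unfolding orth_proj_def using assms by (rule inner_orthonormal_sum)

lemma norm_orth_proj_sq:
  assumes "orthonormal_upto m p" "I \<subseteq> {..<m}"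
  shows "(norm (orth_proj p I x))\<^sup>2 = (\<Sum>i\<in>I. (p i \<bullet> x)\<^sup>2)"
  unfolding orth_proj_def using assms by (rule norm_orthonormal_sum_sq)

lemma orth_proj_self_adjoint: "orth_proj p I x \<bullet> y = x \<bullet> orth_proj p I y"
  by (simp add: orth_proj_def inner_sum_left inner_sum_right inner_commute mult.commute)

lemma bounded_linear_orth_proj: "bounded_linear (orth_proj p I)"
  unfolding orth_proj_def
  by (intro bounded_linear_sum bounded_linear_compose[OF bounded_linear_scaleR_left]
      bounded_linear_inner_right)

lemma linear_orth_proj: "linear (orth_proj p I)"
  by (rule bounded_linear.linear[OF bounded_linear_orth_proj])

lemma orth_proj_in_span: "orth_proj p I x \<in> span (p ` I)"
  unfolding orth_proj_def by (intro span_sum span_scale span_base) simp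

lemma orth_proj_span:
  assumes "orthonormal_upto m p" "I \<subseteq> {..<m}" "x \<in> span (p ` I)"
  shows "orth_proj p I x = x"
proof -
  have "x - orth_proj p I x = 0"
  proof (rule linear_eq_0_on_span[OF _ _ assms(3), where f = "\<lambda>x. x - orth_proj p I x"])
    show "linear (\<lambda>x. x - orth_proj p I x)"
      by (intro linear_compose_sub linear_id[unfolded id_def] linear_orth_proj)
    fix y assume "y \<in> p ` I"
    then obtain j where "j \<in> I" "y = p j" by blast
    have "p i \<bullet> p j = (if i = j then 1 else 0)" if "i \<in> I" for i
      using assms(1,2) \<open>j \<in> I\<close> that unfolding orthonormal_upto_def by blast
    then have "orth_proj p I y = (\<Sum>i\<in>I. if i = j then p i else 0)"
      unfolding orth_proj_def \<open>y = p j\<close> by (intro sum.cong) simp_all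
    also have "\<dots> = y"
      using \<open>j \<in> I\<close> \<open>y = p j\<close> finite_subset[OF assms(2)] by (simp add: sum.delta')
    finally show "y - orth_proj p I y = 0" by simp
  qed
  then show ?thesis by simp
qed

lemma orth_proj_idem:
  assumes "orthonormal_upto m p" "I \<subseteq> {..<m}"
  shows "orth_proj p I (orth_proj p I x) = orth_proj p I x"
  using assms orth_proj_in_span by (rule orth_proj_span)

lemma norm_orth_proj_le:
  assumes "orthonormal_upto m p" "I \<subseteq> {..<m}"
  shows "norm (orth_proj p I x) \<le> norm x"
proof -
  have "(norm (orth_proj p I x))\<^sup>2 = x \<bullet> orth_proj p I x"
    by (simp add: power2_norm_eq_inner orth_proj_self_adjoint orth_proj_idem[OF assms])
  also have "\<dots> \<le> norm x * norm (orth_proj p I x)"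
    by (rule norm_cauchy_schwarz)
  finally have "norm (orth_proj p I x) * norm (orth_proj p I x) \<le> norm x * norm (orth_proj p I x)"
    by (simp add: power2_eq_square)
  then show ?thesis
    by (cases "norm (orth_proj p I x) = 0") (auto simp: mult_le_cancel_right)
qed

lemma orth_proj_split:
  assumes "r \<le> m"
  shows "orth_proj p {..<m} x = orth_proj p {..<r} x + orth_proj p {r..<m} x"
proof -
  have "orth_proj p ({..<r} \<union> {r..<m}) x = orth_proj p {..<r} x + orth_proj p {r..<m} x"
    unfolding orth_proj_def by (rule sum.union_disjoint) auto
  moreover have "{..<r} \<union> {r..<m} = {..<m}" using assms by auto
  ultimately show ?thesis by simp
qed

lemma dim_span_orthonormal_upto:
  assumes "orthonormal_upto n p"
  shows "dim (span (p ` {..<n})) = n"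
proof -
  have p: "p i \<bullet> p j = (if i = j then 1 else 0)" if "i < n" "j < n" for i j
    using assms that unfolding orthonormal_upto_def by blast
  have "inj_on p {..<n}"
    by (rule inj_onI) (metis lessThan_iff p zero_neq_one)
  moreover have "independent (p ` {..<n})"
    using p by (intro pairwise_orthogonal_independent) (force simp: pairwise_def orthogonal_def)+
  ultimately show ?thesis by (simp add: dim_eq_card_independent card_image)
qed

lemma orth_proj_complete:
  fixes p :: "nat \<Rightarrow> 'a::euclidean_space"
  assumes "orthonormal_upto DIM('a) p"
  shows "orth_proj p {..<DIM('a)} x = x"
proof -
  have "span (p ` {..<DIM('a)}) = UNIV"
    using dim_span_orthonormal_upto[OF assms] dim_eq_full by (metis dim_span)
  then show ?thesis using assms by (intro orth_proj_span) auto
qed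

lemma exists_orthogonal_in_span:
  fixes p q :: "nat \<Rightarrow> 'a::euclidean_space"
  assumes "orthonormal_upto n p" "k < n"
  obtains z where "z \<in> span (p ` {..<n})" "z \<noteq> 0" "\<And>i. i < k \<Longrightarrow> q i \<bullet> z = 0"
proof -
  let ?P = "orth_proj p {..<n}"
  let ?S = "?P ` q ` {..<k}"
  have "dim ?S \<le> k"
    by (metis card_image_le card_lessThan dim_le_card' finite_imageI finite_lessThan le_trans)
  then have "span ?S \<noteq> span (p ` {..<n})"
    using dim_span_orthonormal_upto[OF assms(1)] assms(2) by (metis dim_span not_less)
  moreover have "span ?S \<subseteq> span (p ` {..<n})"
    by (rule span_minimal) (auto intro: orth_proj_in_span)
  ultimately obtain z where z: "z \<noteq> 0" "z \<in> span (p ` {..<n})"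
      and orth: "\<And>y. y \<in> span ?S \<Longrightarrow> orthogonal z y"
    by (metis orthogonal_to_subspace_exists_gen psubsetI)
  have "q i \<bullet> z = 0" if "i < k" for i
  proof -
    have "q i \<bullet> z = q i \<bullet> ?P z" using orth_proj_span[OF assms(1) order.refl z(2)] by simp
    also have "\<dots> = z \<bullet> ?P (q i)" by (metis inner_commute orth_proj_self_adjoint)
    also have "\<dots> = 0" using orth[of "?P (q i)"] that by (auto simp: orthogonal_def span_base)
    finally show ?thesis .
  qed
  with z that show ?thesis by blast
qed

lemma norm_adjoint_le:
  assumes adj: "\<And>x y. g y \<bullet> x = y \<bullet> f x" and bound: "\<And>x. norm (f x) \<le> c * norm x"
    and "0 \<le> c"
  shows "norm (g y) \<le> c * norm y"
proof -
  have "norm (g y) * norm (g y) = g y \<bullet> g y"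
    by (metis power2_norm_eq_inner power2_eq_square)
  also have "\<dots> = y \<bullet> f (g y)" by (rule adj)
  also have "\<dots> \<le> norm y * (c * norm (g y))"
    using norm_cauchy_schwarz[of y "f (g y)"] mult_left_mono[OF bound norm_ge_zero] by (rule order.trans)
  finally have "norm (g y) * norm (g y) \<le> (c * norm y) * norm (g y)"
    by (simp add: mult_ac)
  then show ?thesis
    using \<open>0 \<le> c\<close> by (cases "norm (g y) = 0") (auto simp: mult_le_cancel_right)
qed

lemma norm_orth_proj_comp_le:
  "norm (orth_proj p I (orth_proj q J x)) \<le> onorm (\<lambda>x. orth_proj q J (orth_proj p I x)) * norm x"
proof (rule norm_adjoint_le)
  have bl: "bounded_linear (\<lambda>x. orth_proj q J (orth_proj p I x))"
    by (rule bounded_linear_compose[OF bounded_linear_orth_proj bounded_linear_orth_proj])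
  show "norm (orth_proj q J (orth_proj p I x)) \<le> onorm (\<lambda>x. orth_proj q J (orth_proj p I x)) * norm x"
    for x by (rule onorm[OF bl])
  show "0 \<le> onorm (\<lambda>x. orth_proj q J (orth_proj p I x))" by (rule onorm_pos_le[OF bl])
qed (simp add: orth_proj_self_adjoint)

definition has_svd ::
    "('a::real_inner \<Rightarrow> 'b::real_inner) \<Rightarrow> nat \<Rightarrow> (nat \<Rightarrow> real) \<Rightarrow> (nat \<Rightarrow> 'a) \<Rightarrow> (nat \<Rightarrow> 'b) \<Rightarrow> bool"
  where "has_svd F m \<sigma> p q \<longleftrightarrow> orthonormal_upto m p \<and> orthonormal_upto m q \<and>
     (\<forall>i j. i \<le> j \<longrightarrow> \<sigma> j \<le> \<sigma> i) \<and> (\<forall>i. 0 \<le> \<sigma> i) \<and> (\<forall>i. m \<le> i \<longrightarrow> \<sigma> i = 0) \<and>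
     (\<forall>x. F x = (\<Sum>i<m. (\<sigma> i * (p i \<bullet> x)) *\<^sub>R q i))"

lemma has_svdD:
  assumes "has_svd F m \<sigma> p q"
  shows "orthonormal_upto m p" "orthonormal_upto m q" "i \<le> j \<Longrightarrow> \<sigma> j \<le> \<sigma> i" "0 \<le> \<sigma> i"
    "m \<le> i \<Longrightarrow> \<sigma> i = 0" "F x = (\<Sum>i<m. (\<sigma> i * (p i \<bullet> x)) *\<^sub>R q i)"
  using assms unfolding has_svd_def by blast+

lemma has_svd_orth_proj:
  assumes F: "has_svd F m \<sigma> p q" and I: "I \<subseteq> {..<m}"
  shows "F (orth_proj p I x) = (\<Sum>i\<in>I. (\<sigma> i * (p i \<bullet> x)) *\<^sub>R q i)"
proof -
  have "F (orth_proj p I x) = (\<Sum>i<m. if i \<in> I then (\<sigma> i * (p i \<bullet> x)) *\<^sub>R q i else 0)"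
    unfolding has_svdD(6)[OF F] by (intro sum.cong) (auto simp: inner_orth_proj[OF has_svdD(1)[OF F] I])
  also have "\<dots> = (\<Sum>i\<in>I. (\<sigma> i * (p i \<bullet> x)) *\<^sub>R q i)"
    using I by (simp add: sum.inter_restrict[symmetric] Int_absorb1)
  finally show ?thesis .
qed

lemma has_svd_orth_proj_commute:
  assumes F: "has_svd F m \<sigma> p q" and I: "I \<subseteq> {..<m}"
  shows "F (orth_proj p I x) = orth_proj q I (F x)"
proof -
  have "orth_proj q I (F x) = (\<Sum>i\<in>I. (q i \<bullet> F x) *\<^sub>R q i)"
    by (simp add: orth_proj_def)
  also have "\<dots> = (\<Sum>i\<in>I. (\<sigma> i * (p i \<bullet> x)) *\<^sub>R q i)"
    using I by (intro sum.cong)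
      (auto simp: has_svdD(6)[OF F, of x] inner_orthonormal_sum[OF has_svdD(2)[OF F] order.refl])
  finally show ?thesis by (simp add: has_svd_orth_proj[OF F I])
qed

lemma norm_has_svd_orth_proj_sq:
  assumes F: "has_svd F m \<sigma> p q" and I: "I \<subseteq> {..<m}"
  shows "(norm (F (orth_proj p I x)))\<^sup>2 = (\<Sum>i\<in>I. (\<sigma> i)\<^sup>2 * (p i \<bullet> x)\<^sup>2)"
  unfolding has_svd_orth_proj[OF F I] norm_orthonormal_sum_sq[OF has_svdD(2)[OF F] I]
  by (simp add: power_mult_distrib)

lemma norm_has_svd_tail_le:
  assumes F: "has_svd F m \<sigma> p q"
  shows "norm (F (orth_proj p {k..<m} x)) \<le> \<sigma> k * norm (orth_proj p {k..<m} x)"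
proof -
  have I: "{k..<m} \<subseteq> {..<m}" by auto
  have "(norm (F (orth_proj p {k..<m} x)))\<^sup>2 \<le> (\<Sum>i\<in>{k..<m}. (\<sigma> k)\<^sup>2 * (p i \<bullet> x)\<^sup>2)"
    unfolding norm_has_svd_orth_proj_sq[OF F I]
    by (intro sum_mono mult_right_mono power_mono) (auto intro: has_svdD(3,4)[OF F])
  also have "\<dots> = (\<sigma> k)\<^sup>2 * (norm (orth_proj p {k..<m} x))\<^sup>2"
    by (simp add: norm_orth_proj_sq[OF has_svdD(1)[OF F] I] sum_distrib_left)
  also have "\<dots> = (\<sigma> k * norm (orth_proj p {k..<m} x))\<^sup>2"
    by (rule power_mult_distrib[symmetric])
  finally show ?thesis
    by (rule power2_le_imp_le) (simp add: has_svdD(4)[OF F])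
qed

lemma norm_has_svd_head_ge:
  assumes F: "has_svd F m \<sigma> p q" and "k \<le> m"
  shows "\<sigma> (k - 1) * norm (orth_proj p {..<k} x) \<le> norm (F (orth_proj p {..<k} x))"
proof -
  have I: "{..<k} \<subseteq> {..<m}" using \<open>k \<le> m\<close> by auto
  have "(\<sigma> (k - 1) * norm (orth_proj p {..<k} x))\<^sup>2 = (\<sigma> (k - 1))\<^sup>2 * (norm (orth_proj p {..<k} x))\<^sup>2"
    by (rule power_mult_distrib)
  also have "\<dots> = (\<Sum>i<k. (\<sigma> (k - 1))\<^sup>2 * (p i \<bullet> x)\<^sup>2)"
    by (simp add: norm_orth_proj_sq[OF has_svdD(1)[OF F] I] sum_distrib_left)
  also have "\<dots> \<le> (norm (F (orth_proj p {..<k} x)))\<^sup>2"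
    unfolding norm_has_svd_orth_proj_sq[OF F I]
    by (intro sum_mono mult_right_mono power_mono) (auto intro: has_svdD(3,4)[OF F])
  finally show ?thesis by (rule power2_le_imp_le) simp
qed

definition svd_adjoint ::
    "nat \<Rightarrow> (nat \<Rightarrow> real) \<Rightarrow> (nat \<Rightarrow> 'a::real_inner) \<Rightarrow> (nat \<Rightarrow> 'b::real_inner) \<Rightarrow> 'b \<Rightarrow> 'a"
  where "svd_adjoint m \<sigma> p q y = (\<Sum>i<m. (\<sigma> i * (q i \<bullet> y)) *\<^sub>R p i)"

lemma has_svd_svd_adjoint: "has_svd F m \<sigma> p q \<Longrightarrow> has_svd (svd_adjoint m \<sigma> p q) m \<sigma> q p"
  unfolding has_svd_def svd_adjoint_def by simp

lemma inner_svd_adjoint: "has_svd F m \<sigma> p q \<Longrightarrow> svd_adjoint m \<sigma> p q y \<bullet> x = y \<bullet> F x"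
  unfolding svd_adjoint_def has_svd_def
  by (simp add: inner_sum_left inner_sum_right inner_commute mult.commute mult.left_commute)

lemma svd_weyl:
  fixes F F' :: "'a::euclidean_space \<Rightarrow> 'b::real_inner"
  assumes F: "has_svd F m \<sigma> p q" and F': "has_svd F' m \<sigma>' p' q'"
    and E: "\<And>x. norm (F x - F' x) \<le> e * norm x" and "0 \<le> e"
  shows "\<sigma> k \<le> \<sigma>' k + e"
proof (cases "k < m")
  case False
  then show ?thesis using has_svdD(4,5)[OF F] has_svdD(4)[OF F'] \<open>0 \<le> e\<close> by (simp add: add_nonneg_nonneg)
next
  case True
  have p: "orthonormal_upto (Suc k) p"
    using True by (intro orthonormal_upto_mono[OF has_svdD(1)[OF F]]) simp
  obtain z where z: "z \<in> span (p ` {..<Suc k})" "z \<noteq> 0" and orth: "\<And>i. i < k \<Longrightarrow> p' i \<bullet> z = 0"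
    using exists_orthogonal_in_span[OF p lessI] by blast
  have "F' z = (\<Sum>i\<in>{k..<m}. (\<sigma>' i * (p' i \<bullet> z)) *\<^sub>R q' i)"
    unfolding has_svdD(6)[OF F'] by (rule sum.mono_neutral_right) (auto simp: orth)
  also have "\<dots> = F' (orth_proj p' {k..<m} z)"
    by (rule has_svd_orth_proj[OF F', symmetric]) auto
  finally have F'z: "F' z = F' (orth_proj p' {k..<m} z)" .
  have "norm (F' z) \<le> \<sigma>' k * norm (orth_proj p' {k..<m} z)"
    unfolding F'z by (rule norm_has_svd_tail_le[OF F'])
  also have "\<dots> \<le> \<sigma>' k * norm z"
    by (intro mult_left_mono norm_orth_proj_le[OF has_svdD(1)[OF F']] has_svdD(4)[OF F']) auto
  finally have upper: "norm (F' z) \<le> \<sigma>' k * norm z" .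
  have "\<sigma> k * norm z \<le> norm (F z)"
    using norm_has_svd_head_ge[OF F, of "Suc k" z] True orth_proj_span[OF p order.refl z(1)] by simp
  also have "\<dots> \<le> norm (F' z) + norm (F z - F' z)"
    by (rule norm_triangle_sub)
  also have "\<dots> \<le> \<sigma>' k * norm z + e * norm z"
    using upper E[of z] by (rule add_mono)
  finally have "\<sigma> k * norm z \<le> (\<sigma>' k + e) * norm z"
    by (simp add: algebra_simps)
  then show ?thesis using z(2) by (simp add: mult_le_cancel_right_pos)
qed

lemma sin_theta_coupling:
  assumes F: "has_svd F m \<sigma> p q" and F': "has_svd F' m \<sigma>' p' q'"
    and E: "\<And>x. norm (F x - F' x) \<le> e * norm x" and "0 \<le> e" and "r \<le> m"
  shows "\<sigma> (r - 1) * onorm (\<lambda>x. orth_proj p {..<r} (orth_proj p' {r..<m} x))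
    \<le> onorm (\<lambda>y. orth_proj q {..<r} (orth_proj q' {r..<m} y)) * \<sigma>' r + e"
proof -
  let ?PT = "orth_proj p {..<r}" and ?PB' = "orth_proj p' {r..<m}"
  let ?QT = "orth_proj q {..<r}" and ?QB' = "orth_proj q' {r..<m}"
  define b where "b = onorm (\<lambda>y. ?QT (?QB' y))"
  have T: "{..<r} \<subseteq> {..<m}" and B: "{r..<m} \<subseteq> {..<m}" using \<open>r \<le> m\<close> by auto
  have bl: "bounded_linear (\<lambda>y. ?QT (?QB' y))"
    by (rule bounded_linear_compose[OF bounded_linear_orth_proj bounded_linear_orth_proj])
  have "0 \<le> b" unfolding b_def by (rule onorm_pos_le[OF bl])
  have pointwise: "\<sigma> (r - 1) * norm (?PT (?PB' z)) \<le> (b * \<sigma>' r + e) * norm z" for z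
  proof -
    define w where "w = ?PB' z"
    have "norm w \<le> norm z" unfolding w_def by (rule norm_orth_proj_le[OF has_svdD(1)[OF F'] B])
    have F'w: "F' w = ?QB' (F' w)"
      unfolding w_def has_svd_orth_proj_commute[OF F' B] orth_proj_idem[OF has_svdD(2)[OF F'] B] ..
    have "\<sigma> (r - 1) * norm (?PT w) \<le> norm (F (?PT w))"
      by (rule norm_has_svd_head_ge[OF F \<open>r \<le> m\<close>])
    also have "F (?PT w) = ?QT (F' w) + ?QT (F w - F' w)"
      by (simp add: has_svd_orth_proj_commute[OF F T] linear_diff[OF linear_orth_proj])
    also have "norm \<dots> \<le> norm (?QT (?QB' (F' w))) + norm (F w - F' w)"
      using norm_triangle_ineq norm_orth_proj_le[OF has_svdD(2)[OF F] T] F'w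
      by (metis add_left_mono order.trans)
    also have "\<dots> \<le> b * norm (F' w) + e * norm w"
      using onorm[OF bl] E unfolding b_def by (rule add_mono)
    also have "\<dots> \<le> b * (\<sigma>' r * norm w) + e * norm w"
      using norm_has_svd_tail_le[OF F', of r z] F'w \<open>0 \<le> b\<close> unfolding w_def
      by (simp add: orth_proj_idem[OF has_svdD(1)[OF F'] B] mult_left_mono)
    also have "\<dots> \<le> b * (\<sigma>' r * norm z) + e * norm z"
      using \<open>norm w \<le> norm z\<close> \<open>0 \<le> b\<close> \<open>0 \<le> e\<close> has_svdD(4)[OF F']
      by (intro add_mono mult_left_mono) auto
    also have "\<dots> = (b * \<sigma>' r + e) * norm z"
      by (simp add: algebra_simps)
    finally show ?thesis unfolding w_def .
  qed
  show ?thesis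
  proof (cases "\<sigma> (r - 1) = 0")
    case True
    then show ?thesis using \<open>0 \<le> b\<close> \<open>0 \<le> e\<close> has_svdD(4)[OF F'] unfolding b_def by simp
  next
    case False
    then have pos: "0 < \<sigma> (r - 1)" using has_svdD(4)[OF F] by (simp add: order_less_le)
    have "onorm (\<lambda>x. ?PT (?PB' x)) \<le> (b * \<sigma>' r + e) / \<sigma> (r - 1)"
      using pointwise pos \<open>0 \<le> b\<close> \<open>0 \<le> e\<close> has_svdD(4)[OF F']
      by (intro onorm_bound) (simp_all add: field_simps)
    then show ?thesis using pos unfolding b_def by (simp add: field_simps)
  qed
qed

lemma wedin_sin_theta:
  assumes F: "has_svd F m \<sigma> p q" and F': "has_svd F' m \<sigma>' p' q'"
    and E: "\<And>x. norm (F x - F' x) \<le> e * norm x" and "0 \<le> e" and "r \<le> m"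
    and gap: "\<sigma>' r < \<sigma> (r - 1)"
  shows "onorm (\<lambda>y. orth_proj q {..<r} (orth_proj q' {r..<m} y)) \<le> e / (\<sigma> (r - 1) - \<sigma>' r)"
    and "onorm (\<lambda>x. orth_proj p {..<r} (orth_proj p' {r..<m} x)) \<le> e / (\<sigma> (r - 1) - \<sigma>' r)"
proof -
  define G where "G = svd_adjoint m \<sigma> p q"
  define G' where "G' = svd_adjoint m \<sigma>' p' q'"
  have G: "has_svd G m \<sigma> q p" and G': "has_svd G' m \<sigma>' q' p'"
    unfolding G_def G'_def by (rule has_svd_svd_adjoint[OF F], rule has_svd_svd_adjoint[OF F'])
  have EG: "norm (G y - G' y) \<le> e * norm y" for y
  proof (rule norm_adjoint_le[where g = "\<lambda>y. G y - G' y" and f = "\<lambda>x. F x - F' x"])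
    show "(G y - G' y) \<bullet> x = y \<bullet> (F x - F' x)" for x y
      unfolding G_def G'_def
      by (simp add: inner_diff_left inner_diff_right inner_svd_adjoint[OF F] inner_svd_adjoint[OF F'])
  qed (use E \<open>0 \<le> e\<close> in auto)
  define a where "a = onorm (\<lambda>y. orth_proj q {..<r} (orth_proj q' {r..<m} y))"
  define b where "b = onorm (\<lambda>x. orth_proj p {..<r} (orth_proj p' {r..<m} x))"
  define s where "s = \<sigma> (r - 1)"
  define t where "t = \<sigma>' r"
  have "0 \<le> a" "0 \<le> b" unfolding a_def b_def
    by (intro onorm_pos_le bounded_linear_compose[OF bounded_linear_orth_proj bounded_linear_orth_proj])+
  have "0 \<le> t" unfolding t_def by (rule has_svdD(4)[OF F'])
  have sb: "s * b \<le> a * t + e"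
    unfolding a_def b_def s_def t_def by (rule sin_theta_coupling[OF F F' E \<open>0 \<le> e\<close> \<open>r \<le> m\<close>])
  have sa: "s * a \<le> b * t + e"
    unfolding a_def b_def s_def t_def by (rule sin_theta_coupling[OF G G' EG \<open>0 \<le> e\<close> \<open>r \<le> m\<close>])
  have "max a b * (s - t) \<le> e"
  proof (cases "b \<le> a")
    case True
    then show ?thesis using sa mult_right_mono[OF True \<open>0 \<le> t\<close>] by (simp add: algebra_simps)
  next
    case False
    then show ?thesis using sb mult_right_mono[of a b t] \<open>0 \<le> t\<close> by (simp add: algebra_simps)
  qed
  moreover have "0 < s - t" using gap unfolding s_def t_def by simp
  moreover have "a * (s - t) \<le> max a b * (s - t)" "b * (s - t) \<le> max a b * (s - t)"
    using \<open>0 < s - t\<close> by (intro mult_right_mono; simp)+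
  ultimately have "a * (s - t) \<le> e" "b * (s - t) \<le> e"
    by linarith+
  with \<open>0 < s - t\<close> show "a \<le> e / (s - t)" "b \<le> e / (s - t)"
    by (simp_all add: pos_le_divide_eq)
qed

lemma orth_proj_diff_decomp:
  assumes p: "\<And>y. orth_proj p {..<m} y = y" and q: "\<And>y. orth_proj q {..<m} y = y" and "r \<le> m"
  shows "orth_proj q {..<r} w - orth_proj p {..<r} w
    = orth_proj q {..<r} (orth_proj p {r..<m} w) - orth_proj q {r..<m} (orth_proj p {..<r} w)"
proof -
  have "w = orth_proj p {..<r} w + orth_proj p {r..<m} w"
    using p orth_proj_split[OF \<open>r \<le> m\<close>] by metis
  then have "orth_proj q {..<r} w
      = orth_proj q {..<r} (orth_proj p {..<r} w) + orth_proj q {..<r} (orth_proj p {r..<m} w)"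
    by (metis linear_add[OF linear_orth_proj])
  moreover have "orth_proj p {..<r} w
      = orth_proj q {..<r} (orth_proj p {..<r} w) + orth_proj q {r..<m} (orth_proj p {..<r} w)"
    using q orth_proj_split[OF \<open>r \<le> m\<close>] by metis
  ultimately show ?thesis by (simp add: algebra_simps)
qed

lemma norm_orth_proj_head_tail_le:
  assumes F: "has_svd F m \<sigma> p q"
  shows "norm (orth_proj q' {..<r} (orth_proj q {r..<m} (F x)))
    \<le> onorm (\<lambda>y. orth_proj q' {..<r} (orth_proj q {r..<m} y)) * \<sigma> r * norm x"
proof -
  let ?K = "onorm (\<lambda>y. orth_proj q' {..<r} (orth_proj q {r..<m} y))"
  have B: "{r..<m} \<subseteq> {..<m}" by auto
  have "0 \<le> ?K"
    by (intro onorm_pos_le bounded_linear_compose[OF bounded_linear_orth_proj bounded_linear_orth_proj])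
  have "orth_proj q' {..<r} (orth_proj q {r..<m} (F x))
      = orth_proj q' {..<r} (orth_proj q {r..<m} (orth_proj q {r..<m} (F x)))"
    by (simp add: orth_proj_idem[OF has_svdD(2)[OF F] B])
  also have "norm \<dots> \<le> ?K * norm (orth_proj q {r..<m} (F x))"
    by (intro onorm bounded_linear_compose[OF bounded_linear_orth_proj bounded_linear_orth_proj])
  also have "norm (orth_proj q {r..<m} (F x)) \<le> \<sigma> r * norm x"
    unfolding has_svd_orth_proj_commute[OF F B, symmetric]
    using norm_has_svd_tail_le[OF F, of r x] norm_orth_proj_le[OF has_svdD(1)[OF F] B, of x]
      has_svdD(4)[OF F] by (meson mult_left_mono order_trans)
  finally show ?thesis using \<open>0 \<le> ?K\<close> by (simp add: mult_left_mono mult.assoc)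
qed

lemma norm_orth_proj_tail_head_le:
  assumes F: "has_svd F m \<sigma> p q" and Fs: "has_svd Fs m \<sigma>s ps qs"
    and E: "\<And>x. norm (F x - Fs x) \<le> e * norm x" and "0 \<le> e" and "r \<le> m"
  shows "norm (orth_proj q {r..<m} (orth_proj qs {..<r} (Fs x)))
    \<le> (\<sigma> r * onorm (\<lambda>y. orth_proj ps {..<r} (orth_proj p {r..<m} y)) + e) * norm x"
proof -
  let ?K = "onorm (\<lambda>y. orth_proj ps {..<r} (orth_proj p {r..<m} y))"
  have T: "{..<r} \<subseteq> {..<m}" and B: "{r..<m} \<subseteq> {..<m}" using \<open>r \<le> m\<close> by auto
  define x' where "x' = orth_proj ps {..<r} x"
  have "norm x' \<le> norm x" unfolding x'_def by (rule norm_orth_proj_le[OF has_svdD(1)[OF Fs] T])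
  have "orth_proj q {r..<m} (orth_proj qs {..<r} (Fs x))
      = F (orth_proj p {r..<m} x') - orth_proj q {r..<m} (F x' - Fs x')"
    by (simp add: x'_def has_svd_orth_proj_commute[OF Fs T] has_svd_orth_proj_commute[OF F B]
        linear_diff[OF linear_orth_proj])
  also have "norm \<dots> \<le> \<sigma> r * norm (orth_proj p {r..<m} x') + norm (F x' - Fs x')"
    using norm_has_svd_tail_le[OF F] norm_orth_proj_le[OF has_svdD(2)[OF F] B]
    by (meson add_mono norm_triangle_ineq4 order_trans)
  also have "\<dots> \<le> \<sigma> r * (?K * norm x) + e * norm x"
    using norm_orth_proj_comp_le[of p "{r..<m}" ps "{..<r}" x] E[of x'] \<open>norm x' \<le> norm x\<close>
      \<open>0 \<le> e\<close> has_svdD(4)[OF F] unfolding x'_def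
    by (intro add_mono mult_left_mono) (auto intro: order_trans mult_left_mono)
  also have "\<dots> = (\<sigma> r * ?K + e) * norm x" by (simp add: algebra_simps)
  finally show ?thesis .
qed

lemma wedin_constant_le:
  fixes e \<delta> t :: real
  assumes "0 \<le> e" "2 * e < \<delta>" "0 \<le> t"
  shows "e / (\<delta> - e) * (2 * t + e) + e \<le> 4 * (t + \<delta>) * e / \<delta>"
proof -
  have "0 < \<delta>" "0 < \<delta> - e" using assms by linarith+
  have "e * \<delta> \<le> 2 * e * (\<delta> - e)"
    using mult_left_mono[of "2 * e" \<delta> e] assms by (simp add: algebra_simps)
  then have "e / (\<delta> - e) \<le> 2 * e / \<delta>"
    using \<open>0 < \<delta>\<close> \<open>0 < \<delta> - e\<close> by (simp add: field_simps)
  then have "e / (\<delta> - e) * (2 * t + e) + e \<le> 2 * e / \<delta> * (2 * t + e) + e"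
    using assms by (intro add_right_mono mult_right_mono) auto
  also have "\<dots> = 4 * t * e / \<delta> + 2 * e / \<delta> * e + e"
    using \<open>0 < \<delta>\<close> by (simp add: field_simps)
  also have "\<dots> \<le> 4 * t * e / \<delta> + 1 * e + e"
    using assms \<open>0 < \<delta>\<close> by (intro add_mono mult_right_mono order.refl) simp_all
  also have "\<dots> \<le> 4 * (t + \<delta>) * e / \<delta>"
    using assms \<open>0 < \<delta>\<close> by (simp add: field_simps)
  finally show ?thesis .
qed

lemma wedin_sin_theta_gap:
  fixes Fs F :: "'a::euclidean_space \<Rightarrow> 'b::real_inner"
  assumes Fs: "has_svd Fs m \<sigma>s ps qs" and F: "has_svd F m \<sigma> p q"
    and E: "\<And>x. norm (F x - Fs x) \<le> e * norm x" and "0 \<le> e"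
    and "r \<le> m" and gap: "2 * e < \<sigma>s (r - 1) - \<sigma>s r"
  shows "onorm (\<lambda>y. orth_proj q {..<r} (orth_proj qs {r..<m} y)) \<le> e / (\<sigma>s (r - 1) - \<sigma>s r - e)"
    and "onorm (\<lambda>x. orth_proj ps {..<r} (orth_proj p {r..<m} x)) \<le> e / (\<sigma>s (r - 1) - \<sigma>s r - e)"
proof -
  have E': "norm (Fs x - F x) \<le> e * norm x" for x
    using E by (simp add: norm_minus_commute)
  have "\<sigma>s (r - 1) \<le> \<sigma> (r - 1) + e" by (rule svd_weyl[OF Fs F E' \<open>0 \<le> e\<close>])
  moreover have "\<sigma> r \<le> \<sigma>s r + e" by (rule svd_weyl[OF F Fs E \<open>0 \<le> e\<close>])
  ultimately have gaps: "0 < \<sigma>s (r - 1) - \<sigma>s r - e"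
      "\<sigma>s (r - 1) - \<sigma>s r - e \<le> \<sigma> (r - 1) - \<sigma>s r"
      "\<sigma>s (r - 1) - \<sigma>s r - e \<le> \<sigma>s (r - 1) - \<sigma> r"
    using gap \<open>0 \<le> e\<close> by linarith+
  have "onorm (\<lambda>y. orth_proj q {..<r} (orth_proj qs {r..<m} y)) \<le> e / (\<sigma> (r - 1) - \<sigma>s r)"
    using gaps by (intro wedin_sin_theta(1)[OF F Fs E \<open>0 \<le> e\<close> \<open>r \<le> m\<close>]) linarith
  also have "\<dots> \<le> e / (\<sigma>s (r - 1) - \<sigma>s r - e)"
    using gaps \<open>0 \<le> e\<close> by (intro divide_left_mono) auto
  finally show "onorm (\<lambda>y. orth_proj q {..<r} (orth_proj qs {r..<m} y)) \<le> e / (\<sigma>s (r - 1) - \<sigma>s r - e)" .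
  have "onorm (\<lambda>x. orth_proj ps {..<r} (orth_proj p {r..<m} x)) \<le> e / (\<sigma>s (r - 1) - \<sigma> r)"
    using gaps by (intro wedin_sin_theta(2)[OF Fs F E' \<open>0 \<le> e\<close> \<open>r \<le> m\<close>]) linarith
  also have "\<dots> \<le> e / (\<sigma>s (r - 1) - \<sigma>s r - e)"
    using gaps \<open>0 \<le> e\<close> by (intro divide_left_mono) auto
  finally show "onorm (\<lambda>x. orth_proj ps {..<r} (orth_proj p {r..<m} x)) \<le> e / (\<sigma>s (r - 1) - \<sigma>s r - e)" .
qed

lemma norm_svd_proj_diff_le:
  fixes Fs F :: "'a::euclidean_space \<Rightarrow> 'b::real_inner"
  assumes Fs: "has_svd Fs m \<sigma>s ps qs" and F: "has_svd F m \<sigma> p q"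
    and E: "\<And>x. norm (F x - Fs x) \<le> e * norm x" and "0 \<le> e"
    and complete: "\<And>y. orth_proj qs {..<m} y = y" "\<And>y. orth_proj q {..<m} y = y"
    and "r \<le> m" and gap: "2 * e < \<sigma>s (r - 1) - \<sigma>s r"
  shows "norm (orth_proj q {..<r} (Fs x) - orth_proj qs {..<r} (Fs x))
    \<le> 4 * \<sigma>s (r - 1) * e / (\<sigma>s (r - 1) - \<sigma>s r) * norm x"
proof -
  define \<delta> where "\<delta> = \<sigma>s (r - 1) - \<sigma>s r"
  define K where "K = e / (\<delta> - e)"
  note sin_theta = wedin_sin_theta_gap[OF Fs F E \<open>0 \<le> e\<close> \<open>r \<le> m\<close> gap, folded \<delta>_def K_def]
  have head_tail: "norm (orth_proj q {..<r} (orth_proj qs {r..<m} (Fs x))) \<le> K * \<sigma>s r * norm x"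
    using norm_orth_proj_head_tail_le[OF Fs, of q r x] sin_theta(1) has_svdD(4)[OF Fs]
    by (meson mult_right_mono norm_ge_zero order_trans)
  have "\<sigma> r * onorm (\<lambda>x. orth_proj ps {..<r} (orth_proj p {r..<m} x)) \<le> (\<sigma>s r + e) * K"
    using svd_weyl[OF F Fs E \<open>0 \<le> e\<close>, of r] sin_theta(2) has_svdD(4)[OF Fs, of r] \<open>0 \<le> e\<close>
      onorm_pos_le[OF bounded_linear_compose[OF bounded_linear_orth_proj bounded_linear_orth_proj]]
    by (intro mult_mono) auto
  then have tail_head:
      "norm (orth_proj q {r..<m} (orth_proj qs {..<r} (Fs x))) \<le> ((\<sigma>s r + e) * K + e) * norm x"
    using norm_orth_proj_tail_head_le[OF F Fs E \<open>0 \<le> e\<close> \<open>r \<le> m\<close>, of x]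
    by (meson add_right_mono mult_right_mono norm_ge_zero order_trans)
  have "norm (orth_proj q {..<r} (Fs x) - orth_proj qs {..<r} (Fs x))
      \<le> norm (orth_proj q {..<r} (orth_proj qs {r..<m} (Fs x)))
        + norm (orth_proj q {r..<m} (orth_proj qs {..<r} (Fs x)))"
    unfolding orth_proj_diff_decomp[OF complete \<open>r \<le> m\<close>] by (rule norm_triangle_ineq4)
  also have "\<dots> \<le> (K * (2 * \<sigma>s r + e) + e) * norm x"
    using head_tail tail_head by (simp add: algebra_simps)
  also have "\<dots> \<le> 4 * \<sigma>s (r - 1) * e / \<delta> * norm x"
    using wedin_constant_le[OF \<open>0 \<le> e\<close>, of \<delta> "\<sigma>s r"] gap has_svdD(4)[OF Fs]
    unfolding K_def \<delta>_def by (intro mult_right_mono) (simp_all add: mult.commute)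
  finally show ?thesis unfolding \<delta>_def .
qed

lemma outer_matrix_vector_mult: "outer a b *v x = (b \<bullet> x) *\<^sub>R a"
  by (simp add: outer_def vec_eq_iff matrix_vector_mult_def inner_vec_def sum_distrib_left mult_ac)

lemma sum_matrix_vector_mult: "finite S \<Longrightarrow> sum f S *v x = (\<Sum>i\<in>S. f i *v x)"
  by (induction S rule: finite_induct) (auto simp: matrix_vector_mult_add_rdistrib)

lemma proj_matrix_vector_mult: "proj u r *v x = orth_proj u {..<r} x"
  unfolding proj_def orth_proj_def by (simp add: sum_matrix_vector_mult outer_matrix_vector_mult inner_commute)

lemma has_svd_is_svd:
  fixes A :: "real^'n^'m"
  assumes "is_svd A \<sigma> u v"
  shows "has_svd (\<lambda>x. A *v x) CARD('m) \<sigma> v u"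
  using assms unfolding is_svd_def has_svd_def orthonormal_upto_def
  by (simp add: sum_matrix_vector_mult scaleR_matrix_vector_assoc[symmetric] outer_matrix_vector_mult)

lemma is_svd_orth_proj_complete:
  fixes A :: "real^'n^'m" and y :: "real^'m"
  assumes "is_svd A \<sigma> u v"
  shows "orth_proj u {..<CARD('m)} y = y"
  using orth_proj_complete[of u y] has_svdD(2)[OF has_svd_is_svd[OF assms]] by simp

lemma norm_le_spec_norm: "norm (A *v x) \<le> spec_norm A * norm x"
  unfolding spec_norm_def by (rule onorm[OF matrix_vector_mul_bounded_linear])

lemma spec_norm_nonneg: "0 \<le> spec_norm A"
  unfolding spec_norm_def by (rule onorm_pos_le[OF matrix_vector_mul_bounded_linear])

theorem lemma6:
  fixes Mstar E :: "real^'n^'m"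
    and \<sigma>s \<sigma> :: "nat \<Rightarrow> real"
    and us u :: "nat \<Rightarrow> real^'m"
    and vs v :: "nat \<Rightarrow> real^'n"
    and r :: nat
  assumes "CARD('m) \<le> CARD('n)"
    and "is_svd Mstar \<sigma>s us vs"
    and "is_svd (Mstar + E) \<sigma> u v"
    and "1 \<le> r" and "r \<le> CARD('m)"
    and "\<sigma>s (r - 1) - \<sigma>s r > 2 * spec_norm E"
  shows "spec_norm ((proj u r - proj us r) ** Mstar)
           \<le> 4 * \<sigma>s (r - 1) * spec_norm E / (\<sigma>s (r - 1) - \<sigma>s r)"
proof -
  let ?bound = "4 * \<sigma>s (r - 1) * spec_norm E / (\<sigma>s (r - 1) - \<sigma>s r)"
  have "norm (((proj u r - proj us r) ** Mstar) *v x) \<le> ?bound * norm x" for x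
  proof -
    have "((proj u r - proj us r) ** Mstar) *v x
        = orth_proj u {..<r} (Mstar *v x) - orth_proj us {..<r} (Mstar *v x)"
      by (simp add: matrix_vector_mul_assoc[symmetric] matrix_vector_mult_diff_rdistrib
          proj_matrix_vector_mult)
    also have "norm \<dots> \<le> ?bound * norm x"
    proof (rule norm_svd_proj_diff_le[OF has_svd_is_svd[OF assms(2)] has_svd_is_svd[OF assms(3)]])
      show "norm ((Mstar + E) *v y - Mstar *v y) \<le> spec_norm E * norm y" for y
        by (simp add: matrix_vector_mult_add_rdistrib norm_le_spec_norm)
    qed (use assms(5,6) spec_norm_nonneg is_svd_orth_proj_complete[OF assms(2)]
          is_svd_orth_proj_complete[OF assms(3)] in auto)
    finally show ?thesis .
  qed
  moreover have "0 \<le> ?bound"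
    using assms(6) spec_norm_nonneg[of E] has_svdD(4)[OF has_svd_is_svd[OF assms(2)]] by simp
  ultimately show ?thesis
    unfolding spec_norm_def[of "(proj u r - proj us r) ** Mstar"] by (intro onorm_bound)
qed

end
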